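(* Let $\psi':V'\otimes V\to V\otimes V^*$ and $\psi:V^*\otimes V\to V\otimes V^*$ be the $R$-linear maps defined by \[ \psi'(v_i'\otimes v_k)=\begin{cases}q^{n+1-2i}\,v_k\otimes v_i^* & k\ne i,\\ q^{n+1-2i}\Bigl(q^{-1}v_i\otimes v_i^*+(q^{-1}-q)\sum_{l=1}^{i-1}v_l\otimes v_l^*\Bigr) & k=i,\end{cases} \] \[ \psi(v_i^*\otimes v_k)=\begin{cases}v_k\otimes v_i^* & k\ne i,\\ q^{-1}v_i\otimes v_i^*+(q^{-1}-q)\sum_{l=1}^{i-1}v_l\otimes v_l^* & k=i.\end{cases} \] Then $\psi'$ and $\psi$ are isomorphisms of $\mathbf U$-modules (in particular bijective for every $R$ and every invertible $q$).
   Context: $R$ is a commutative ring with $1$, $q\in R$ invertible, $n\ge1$. $\mathbf U$ denotes $\mathbf U_R=R\otimes_{\mathbb{Z}[q,q^{-1}]}\mathbf U$, where $\mathbf U$ is the $\mathbb{Z}[q,q^{-1}]$-subalgebra of $U_q(\mathfrak{gl}_n)$ (generators $e_i,f_i$ ($1\le i<n$), $q^h$ ($h\in\bigoplus_j\mathbb{Z}h_j$), standard relations, $K_i=q^{h_i-h_{i+1}}$) generated by the $q^h$ and divided powers $e_i^{(l)}=e_i^l/[l]_q!$, $f_i^{(l)}=f_i^l/[l]_q!$, $[l]_q=\sum_{j=0}^{l-1}q^{2j-l+1}$; Hopf structure $\Delta(q^h)=q^h\otimes q^h$, $\Delta(e_i)=e_i\otimes K_i^{-1}+1\otimes e_i$,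 $\Delta(f_i)=f_i\otimes1+K_i\otimes f_i$, $S(q^h)=q^{-h}$, $S(e_i)=-e_iK_i$, $S(f_i)=-K_i^{-1}f_i$. $V=R^n$ with basis $v_1,\dots,v_n$ is the vector representation: $q^hv_j=q^{\varepsilon_j(h)}v_j$ ($\varepsilon_j(h_k)=\delta_{jk}$), $e_iv_{i+1}=v_i$, $f_iv_i=v_{i+1}$, other $e_iv_j,f_iv_j$ zero. $V^*=\mathrm{Hom}_R(V,R)$ with dual basis $v_i^*$ and action $(xg)(v)=g(S(x)v)$; $V'$ is the same $R$-module with action $(xg)(v)=g(S^{-1}(x)v)$, its basis elements written $v_i'$. Tensor products are modules via $\Delta$. *)

theory Defs
  imports Main
begin

text \<open>Integer powers of the invertible element q, given together with its inverse qi.\<close>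
definition qp :: "'a::comm_ring_1 \<Rightarrow> 'a \<Rightarrow> int \<Rightarrow> 'a" where
  "qp q qi k = (if 0 \<le> k then q ^ nat k else qi ^ nat (- k))"

text \<open>Algebra generators of U_R: q^h (h given by its coordinates h_j, j = 1..n),
  divided powers e_i^(l) and f_i^(l).\<close>
datatype gen = Kh "nat \<Rightarrow> int" | E nat nat | F nat nat

definition valid_gen :: "nat \<Rightarrow> gen \<Rightarrow> bool" where
  "valid_gen n g = (case g of Kh h \<Rightarrow> True | E i l \<Rightarrow> 1 \<le> i \<and> i < n | F i l \<Rightarrow> 1 \<le> i \<and> i < n)"

definition Kpow :: "nat \<Rightarrow> int \<Rightarrow> gen" where
  "Kpow i m = Kh (\<lambda>j. m * ((if j = i then 1 else 0) - (if j = Suc i then 1 else 0)))"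

text \<open>Matrices over a basis index set; entry (b', b) = coefficient of basis vector b'
  in the image of basis vector b.\<close>
definition mmul :: "'b set \<Rightarrow> ('b \<Rightarrow> 'b \<Rightarrow> 'a::comm_ring_1) \<Rightarrow> ('b \<Rightarrow> 'b \<Rightarrow> 'a) \<Rightarrow> 'b \<Rightarrow> 'b \<Rightarrow> 'a" where
  "mmul B A C = (\<lambda>x z. \<Sum>y\<in>B. A x y * C y z)"

definition smul :: "'a::comm_ring_1 \<Rightarrow> ('b \<Rightarrow> 'b \<Rightarrow> 'a) \<Rightarrow> 'b \<Rightarrow> 'b \<Rightarrow> 'a" where
  "smul c A = (\<lambda>x y. c * A x y)"

definition transp :: "('b \<Rightarrow> 'b \<Rightarrow> 'a) \<Rightarrow> 'b \<Rightarrow> 'b \<Rightarrow> 'a" where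
  "transp A = (\<lambda>x y. A y x)"

definition kron :: "('b \<Rightarrow> 'b \<Rightarrow> 'a::comm_ring_1) \<Rightarrow> ('c \<Rightarrow> 'c \<Rightarrow> 'a) \<Rightarrow> 'b \<times> 'c \<Rightarrow> 'b \<times> 'c \<Rightarrow> 'a" where
  "kron A C = (\<lambda>(a', b') (a, b). A a' a * C b' b)"

text \<open>The vector representation V = R^n, basis v_1..v_n (indices 1..n).\<close>
definition vec_rep :: "'a::comm_ring_1 \<Rightarrow> 'a \<Rightarrow> gen \<Rightarrow> nat \<Rightarrow> nat \<Rightarrow> 'a" where
  "vec_rep q qi g = (case g of
      Kh h \<Rightarrow> (\<lambda>j k. if j = k then qp q qi (h j) else 0)
    | E i l \<Rightarrow> (if l = 0 then (\<lambda>j k. if j = k then 1 else 0)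
               else if l = 1 then (\<lambda>j k. if j = i \<and> k = Suc i then 1 else 0)
               else (\<lambda>j k. 0))
    | F i l \<Rightarrow> (if l = 0 then (\<lambda>j k. if j = k then 1 else 0)
               else if l = 1 then (\<lambda>j k. if j = Suc i \<and> k = i then 1 else 0)
               else (\<lambda>j k. 0)))"

text \<open>Dual module M^* with (x g)(v) = g(S(x) v): matrix of x is the transpose of the matrix
  of S(x).\<close>
definition dual_rep :: "'a::comm_ring_1 \<Rightarrow> 'a \<Rightarrow> 'b set \<Rightarrow> (gen \<Rightarrow> 'b \<Rightarrow> 'b \<Rightarrow> 'a) \<Rightarrow> gen \<Rightarrow> 'b \<Rightarrow> 'b \<Rightarrow> 'a" where
  "dual_rep q qi B \<rho> g = transp (case g of
      Kh h \<Rightarrow> \<rho> (Kh (\<lambda>j. - h j))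
    | E i l \<Rightarrow> smul ((-1) ^ l * qp q qi (int (l * (l - 1)))) (mmul B (\<rho> (E i l)) (\<rho> (Kpow i (int l))))
    | F i l \<Rightarrow> smul ((-1) ^ l * qp q qi (- int (l * (l - 1)))) (mmul B (\<rho> (Kpow i (- int l))) (\<rho> (F i l))))"

text \<open>The module M' with (x g)(v) = g(S^{-1}(x) v).  Here S^{-1}(q^h) = q^(-h),
  S^{-1}(e_i^(l)) = (-1)^l q^(-l(l-1)) K_i^l e_i^(l),
  S^{-1}(f_i^(l)) = (-1)^l q^(l(l-1)) f_i^(l) K_i^(-l).\<close>
definition dualp_rep :: "'a::comm_ring_1 \<Rightarrow> 'a \<Rightarrow> 'b set \<Rightarrow> (gen \<Rightarrow> 'b \<Rightarrow> 'b \<Rightarrow> 'a) \<Rightarrow> gen \<Rightarrow> 'b \<Rightarrow> 'b \<Rightarrow> 'a" where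
  "dualp_rep q qi B \<rho> g = transp (case g of
      Kh h \<Rightarrow> \<rho> (Kh (\<lambda>j. - h j))
    | E i l \<Rightarrow> smul ((-1) ^ l * qp q qi (- int (l * (l - 1)))) (mmul B (\<rho> (Kpow i (int l))) (\<rho> (E i l)))
    | F i l \<Rightarrow> smul ((-1) ^ l * qp q qi (int (l * (l - 1)))) (mmul B (\<rho> (F i l)) (\<rho> (Kpow i (- int l)))))"

text \<open>Tensor product via the coproduct:
  Delta(q^h) = q^h (x) q^h,
  Delta(e_i^(l)) = sum_k q^(-k(l-k)) e_i^(l-k) (x) e_i^(k) K_i^(-(l-k)),
  Delta(f_i^(l)) = sum_k q^(-k(l-k)) f_i^(k) K_i^(l-k) (x) f_i^(l-k)
  (these follow from Delta(e_i), Delta(f_i) by the q-binomial formula).\<close>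
definition tensor_rep :: "'a::comm_ring_1 \<Rightarrow> 'a \<Rightarrow> 'b set \<Rightarrow> 'c set \<Rightarrow> (gen \<Rightarrow> 'b \<Rightarrow> 'b \<Rightarrow> 'a)
    \<Rightarrow> (gen \<Rightarrow> 'c \<Rightarrow> 'c \<Rightarrow> 'a) \<Rightarrow> gen \<Rightarrow> 'b \<times> 'c \<Rightarrow> 'b \<times> 'c \<Rightarrow> 'a" where
  "tensor_rep q qi B1 B2 \<rho> \<sigma> g = (case g of
      Kh h \<Rightarrow> kron (\<rho> g) (\<sigma> g)
    | E i l \<Rightarrow> (\<lambda>x y. \<Sum>k\<in>{0..l}. qp q qi (- int (k * (l - k))) *
          kron (\<rho> (E i (l - k))) (mmul B2 (\<sigma> (E i k)) (\<sigma> (Kpow i (- int (l - k))))) x y)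
    | F i l \<Rightarrow> (\<lambda>x y. \<Sum>k\<in>{0..l}. qp q qi (- int (k * (l - k))) *
          kron (mmul B1 (\<rho> (F i k)) (\<rho> (Kpow i (int (l - k))))) (\<sigma> (F i (l - k))) x y))"

text \<open>Free R-module with basis B: coordinate functions vanishing outside B.\<close>
definition carrier :: "'b set \<Rightarrow> ('b \<Rightarrow> 'a::zero) set" where
  "carrier B = {x. \<forall>b. b \<notin> B \<longrightarrow> x b = 0}"

definition act :: "'b set \<Rightarrow> ('b \<Rightarrow> 'b \<Rightarrow> 'a::comm_ring_1) \<Rightarrow> ('b \<Rightarrow> 'a) \<Rightarrow> 'b \<Rightarrow> 'a" where
  "act B M x = (\<lambda>b'. if b' \<in> B then \<Sum>b\<in>B. M b' b * x b else 0)"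

definition lin_ext :: "'b set \<Rightarrow> ('b \<Rightarrow> 'c \<Rightarrow> 'a::comm_ring_1) \<Rightarrow> ('b \<Rightarrow> 'a) \<Rightarrow> 'c \<Rightarrow> 'a" where
  "lin_ext B img x = (\<lambda>c. \<Sum>b\<in>B. x b * img b c)"

definition is_U_iso :: "nat \<Rightarrow> 'b set \<Rightarrow> (gen \<Rightarrow> 'b \<Rightarrow> 'b \<Rightarrow> 'a::comm_ring_1) \<Rightarrow> 'c set
    \<Rightarrow> (gen \<Rightarrow> 'c \<Rightarrow> 'c \<Rightarrow> 'a) \<Rightarrow> (('b \<Rightarrow> 'a) \<Rightarrow> ('c \<Rightarrow> 'a)) \<Rightarrow> bool" where
  "is_U_iso n B1 \<rho>1 B2 \<rho>2 \<phi> =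
    ((\<forall>g x. valid_gen n g \<longrightarrow> x \<in> carrier B1 \<longrightarrow> \<phi> (act B1 (\<rho>1 g) x) = act B2 (\<rho>2 g) (\<phi> x))
     \<and> bij_betw \<phi> (carrier B1) (carrier B2))"

definition basis :: "nat \<Rightarrow> nat set" where
  "basis n = {1..n}"

text \<open>psi'(v_i' (x) v_k), as element of V (x) V^* with basis index (a, b) = v_a (x) v_b^*.\<close>
definition psi'_img :: "'a::comm_ring_1 \<Rightarrow> 'a \<Rightarrow> nat \<Rightarrow> nat \<times> nat \<Rightarrow> nat \<times> nat \<Rightarrow> 'a" where
  "psi'_img q qi n = (\<lambda>(i, k) (a, b). qp q qi (int n + 1 - 2 * int i) *
     (if k \<noteq> i then (if (a, b) = (k, i) then 1 else 0)
      else if (a, b) = (i, i) then qi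
      else if a = b \<and> 1 \<le> a \<and> a < i then qi - q else 0))"

definition psi_img :: "'a::comm_ring_1 \<Rightarrow> 'a \<Rightarrow> nat \<times> nat \<Rightarrow> nat \<times> nat \<Rightarrow> 'a" where
  "psi_img q qi = (\<lambda>(i, k) (a, b).
     (if k \<noteq> i then (if (a, b) = (k, i) then 1 else 0)
      else if (a, b) = (i, i) then qi
      else if a = b \<and> 1 \<le> a \<and> a < i then qi - q else 0))"

end

theory Submission
  imports Defs
begin

(* The modules V'\<otimes>V, V\<^sup>*\<otimes>V and V\<otimes>V\<^sup>* are free on the pairs (i, k), 1 \<le> i, k \<le> n, and \<psi>, \<psi>'
  are given by explicit matrices, so U-linearity is the matrix identity \<Psi> \<rho>(x) = \<rho>'(x) \<Psi> for each
  algebra generator x.  Only q^h and the divided powers e_i^(l), f_i^(l) with l \<le> 2 act by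
  non-zero operators on these tensor products; their matrices are read off from the coproduct and the
  identity is checked entrywise.
  \<psi>' is \<psi> precomposed with the rescaling v_i' \<mapsto> q^(n+1-2i) v_i^*.  This rescaling is U-linear
  because S\<^sup>2 is inner: V' \<cong> V\<^sup>* by precomposition with the group-like element whose conjugation
  is S\<^sup>-\<^sup>2, and that element acts on v_i by q^(n+1-2i).
  \<psi> is bijective: it permutes the off-diagonal vectors v_i^*\<otimes>v_k (i \<noteq> k), and on the diagonal
  vectors v_i^*\<otimes>v_i it is triangular with the unit q\<^sup>-\<^sup>1 on the diagonal. *)

lemma qp_0 [simp]: "qp q qi 0 = 1"
  and qp_1 [simp]: "qp q qi 1 = q"
  and qp_minus_1 [simp]: "qp q qi (- 1) = qi"
  by (simp_all add: qp_def)

lemma qp_succ: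
  assumes "q * qi = (1::'a::comm_ring_1)"
  shows "qp q qi (k + 1) = q * qp q qi k"
proof (cases "k \<ge> 0")
  case True
  then show ?thesis by (simp add: qp_def nat_add_distrib)
next
  case False
  then consider "k = -1" | "k < -1" by linarith
  then show ?thesis
  proof cases
    case 1
    then show ?thesis using assms by (simp add: qp_def)
  next
    case 2
    then have "nat (- k) = Suc (nat (- (k + 1)))" by simp
    then show ?thesis using 2 assms by (simp add: qp_def mult.assoc[symmetric])
  qed
qed

lemma qp_add:
  assumes "q * qi = (1::'a::comm_ring_1)"
  shows "qp q qi (a + b) = qp q qi a * qp q qi b"
proof (induction b rule: int_induct[where k = 0])
  case base
  then show ?case by (simp add: qp_def)
next
  case (step1 b)
  then show ?case
    using qp_succ[OF assms, of "a + b"] qp_succ[OF assms, of b] by (simp add: add.assoc mult.left_commute)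
next
  case (step2 b)
  have cancel: "qi * (q * x) = x" for x using assms by (metis mult.assoc mult.commute mult_1)
  have "q * qp q qi (a + (b - 1)) = q * (qp q qi a * qp q qi (b - 1))"
    using step2 qp_succ[OF assms, of "a + (b - 1)"] qp_succ[OF assms, of "b - 1"]
    by (simp add: mult.left_commute)
  then show ?case using cancel by metis
qed

lemma mmul_diag_right:
  "finite B \<Longrightarrow> mmul B A (\<lambda>y z. if y = z then d y else 0) x z = (if z \<in> B then A x z * d z else 0)"
  unfolding mmul_def by (simp add: if_distrib[of "\<lambda>t. _ * t"] sum.delta' cong: if_cong)

lemma mmul_diag_left:
  "finite B \<Longrightarrow> mmul B (\<lambda>x y. if x = y then d x else 0) A x z = (if x \<in> B then d x * A x z else 0)"
  unfolding mmul_def by (simp add: if_distrib[of "\<lambda>t. t * _"] sum.delta cong: if_cong)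

lemma tensor_rep_E_0:
  "tensor_rep q qi B1 B2 \<rho> \<sigma> (E i 0) = kron (\<rho> (E i 0)) (mmul B2 (\<sigma> (E i 0)) (\<sigma> (Kpow i 0)))"
  by (simp add: tensor_rep_def qp_def)

(* Stated for Suc 0, the simp normal form of 1 :: nat (One_nat_def). *)
lemma tensor_rep_E_1:
  "tensor_rep q qi B1 B2 \<rho> \<sigma> (E i (Suc 0)) x y =
     kron (\<rho> (E i 1)) (mmul B2 (\<sigma> (E i 0)) (\<sigma> (Kpow i (-1)))) x y
   + kron (\<rho> (E i 0)) (mmul B2 (\<sigma> (E i 1)) (\<sigma> (Kpow i 0))) x y"
  by (simp add: tensor_rep_def qp_def)

lemma tensor_rep_E_2:
  "tensor_rep q qi B1 B2 \<rho> \<sigma> (E i 2) x y =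
     kron (\<rho> (E i 2)) (mmul B2 (\<sigma> (E i 0)) (\<sigma> (Kpow i (-2)))) x y
   + qi * kron (\<rho> (E i 1)) (mmul B2 (\<sigma> (E i 1)) (\<sigma> (Kpow i (-1)))) x y
   + kron (\<rho> (E i 0)) (mmul B2 (\<sigma> (E i 2)) (\<sigma> (Kpow i 0))) x y"
  by (simp add: tensor_rep_def qp_def numeral_2_eq_2)

lemma tensor_rep_F_0:
  "tensor_rep q qi B1 B2 \<rho> \<sigma> (F i 0) = kron (mmul B1 (\<rho> (F i 0)) (\<rho> (Kpow i 0))) (\<sigma> (F i 0))"
  by (simp add: tensor_rep_def qp_def)

lemma tensor_rep_F_1:
  "tensor_rep q qi B1 B2 \<rho> \<sigma> (F i (Suc 0)) x y =
     kron (mmul B1 (\<rho> (F i 0)) (\<rho> (Kpow i 1))) (\<sigma> (F i 1)) x y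
   + kron (mmul B1 (\<rho> (F i 1)) (\<rho> (Kpow i 0))) (\<sigma> (F i 0)) x y"
  by (simp add: tensor_rep_def qp_def)

lemma tensor_rep_F_2:
  "tensor_rep q qi B1 B2 \<rho> \<sigma> (F i 2) x y =
     kron (mmul B1 (\<rho> (F i 0)) (\<rho> (Kpow i 2))) (\<sigma> (F i 2)) x y
   + qi * kron (mmul B1 (\<rho> (F i 1)) (\<rho> (Kpow i 1))) (\<sigma> (F i 1)) x y
   + kron (mmul B1 (\<rho> (F i 2)) (\<rho> (Kpow i 0))) (\<sigma> (F i 0)) x y"
  by (simp add: tensor_rep_def qp_def numeral_2_eq_2)

lemma tensor_rep_E_vanish:
  assumes "\<And>m. 2 \<le> m \<Longrightarrow> \<rho> (E i m) = (\<lambda>x y. 0)" "\<And>m. 2 \<le> m \<Longrightarrow> \<sigma> (E i m) = (\<lambda>x y. 0)"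
    and "2 < l"
  shows "tensor_rep q qi B1 B2 \<rho> \<sigma> (E i l) = (\<lambda>x y. 0)"
  unfolding tensor_rep_def gen.case
proof (intro ext sum.neutral ballI)
  fix x y k
  consider "2 \<le> l - k" | "2 \<le> k" using \<open>2 < l\<close> by linarith
  then show "qp q qi (- int (k * (l - k))) * kron (\<rho> (E i (l - k))) (mmul B2 (\<sigma> (E i k)) (\<sigma> (Kpow i (- int (l - k))))) x y = 0"
    by cases (simp_all add: assms(1,2) kron_def mmul_def split: prod.split)
qed

lemma tensor_rep_F_vanish:
  assumes "\<And>m. 2 \<le> m \<Longrightarrow> \<rho> (F i m) = (\<lambda>x y. 0)" "\<And>m. 2 \<le> m \<Longrightarrow> \<sigma> (F i m) = (\<lambda>x y. 0)"
    and "2 < l"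
  shows "tensor_rep q qi B1 B2 \<rho> \<sigma> (F i l) = (\<lambda>x y. 0)"
  unfolding tensor_rep_def gen.case
proof (intro ext sum.neutral ballI)
  fix x y k
  consider "2 \<le> l - k" | "2 \<le> k" using \<open>2 < l\<close> by linarith
  then show "qp q qi (- int (k * (l - k))) * kron (mmul B1 (\<rho> (F i k)) (\<rho> (Kpow i (int (l - k))))) (\<sigma> (F i (l - k))) x y = 0"
    by cases (simp_all add: assms(1,2) kron_def mmul_def split: prod.split)
qed

lemma lin_ext_act_commute:
  fixes img :: "'b \<Rightarrow> 'b \<Rightarrow> 'a::comm_ring_1"
  assumes vanish: "\<And>p c. p \<in> P \<Longrightarrow> c \<notin> P \<Longrightarrow> img p c = 0"
    and commute: "\<And>r c. r \<in> P \<Longrightarrow> c \<in> P \<Longrightarrow> (\<Sum>p\<in>P. img p c * M1 p r) = (\<Sum>p\<in>P. M2 c p * img r p)"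
  shows "lin_ext P img (act P M1 x) = act P M2 (lin_ext P img x)"
proof
  fix c
  have lhs: "lin_ext P img (act P M1 x) c = (\<Sum>p\<in>P. (\<Sum>r\<in>P. M1 p r * x r) * img p c)"
    unfolding lin_ext_def act_def by (rule sum.cong) auto
  show "lin_ext P img (act P M1 x) c = act P M2 (lin_ext P img x) c"
  proof (cases "c \<in> P")
    case True
    have "(\<Sum>p\<in>P. (\<Sum>r\<in>P. M1 p r * x r) * img p c) = (\<Sum>p\<in>P. \<Sum>r\<in>P. x r * (img p c * M1 p r))"
      unfolding sum_distrib_right by (simp add: mult_ac)
    also have "\<dots> = (\<Sum>r\<in>P. x r * (\<Sum>p\<in>P. img p c * M1 p r))"
      by (subst sum.swap) (simp add: sum_distrib_left)
    also have "\<dots> = (\<Sum>r\<in>P. x r * (\<Sum>p\<in>P. M2 c p * img r p))"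
      using commute True by simp
    also have "\<dots> = (\<Sum>p\<in>P. \<Sum>r\<in>P. M2 c p * (x r * img r p))"
      by (subst sum.swap) (simp add: sum_distrib_left mult_ac)
    also have "\<dots> = act P M2 (lin_ext P img x) c"
      using True by (simp add: act_def lin_ext_def sum_distrib_left)
    finally show ?thesis using lhs by simp
  next
    case False
    then show ?thesis using lhs vanish by (simp add: act_def)
  qed
qed

lemma lin_ext_in_carrier:
  assumes "\<And>p c. p \<in> P \<Longrightarrow> c \<notin> P \<Longrightarrow> img p c = 0"
  shows "lin_ext P img x \<in> carrier P"
  using assms by (simp add: carrier_def lin_ext_def)

lemma lin_ext_add: "lin_ext P img (\<lambda>p. x p + y p) = (\<lambda>c. lin_ext P img x c + lin_ext P img y c)"
  and lin_ext_diff: "lin_ext P img (\<lambda>p. x p - y p) = (\<lambda>c. lin_ext P img x c - lin_ext P img y c)"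
  and lin_ext_scale: "lin_ext P img (\<lambda>p. s * x p) = (\<lambda>c. s * lin_ext P img x c)"
  and lin_ext_zero: "lin_ext P img (\<lambda>p. 0) = (\<lambda>c. 0)"
  by (simp_all add: lin_ext_def sum.distrib sum_subtractf sum_distrib_left algebra_simps)

lemma lin_ext_unit: "finite P \<Longrightarrow> p \<in> P \<Longrightarrow> lin_ext P img (\<lambda>p'. if p' = p then 1 else 0) = img p"
  by (simp add: lin_ext_def if_distrib[of "\<lambda>t. t * _"] sum.delta cong: if_cong)

lemma lin_ext_scale_rows: "lin_ext P (\<lambda>p c. w p * img p c) = lin_ext P img \<circ> (\<lambda>x p. w p * x p)"
  by (intro ext) (simp add: lin_ext_def mult_ac)

lemma inj_on_lin_ext:
  assumes "\<And>z. z \<in> carrier P \<Longrightarrow> lin_ext P img z = (\<lambda>c. 0) \<Longrightarrow> z = (\<lambda>p. 0)"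
  shows "inj_on (lin_ext P img) (carrier P)"
proof (rule inj_onI)
  fix x y assume x: "x \<in> carrier P" and y: "y \<in> carrier P" and eq: "lin_ext P img x = lin_ext P img y"
  have "(\<lambda>p. x p - y p) = (\<lambda>p. 0)"
    using x y eq by (intro assms) (simp_all add: carrier_def lin_ext_diff)
  then show "x = y"
    by (metis (no_types) eq_iff_diff_eq_0 ext)
qed

lemma lin_ext_image_add:
  "f \<in> lin_ext P img ` carrier P \<Longrightarrow> g \<in> lin_ext P img ` carrier P \<Longrightarrow> (\<lambda>c. f c + g c) \<in> lin_ext P img ` carrier P"
  and lin_ext_image_scale:
  "f \<in> lin_ext P img ` carrier P \<Longrightarrow> (\<lambda>c. s * f c) \<in> lin_ext P img ` carrier P"
  by (auto simp: lin_ext_add[symmetric] lin_ext_scale[symmetric] carrier_def)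

lemma lin_ext_image_zero: "(\<lambda>c. 0) \<in> lin_ext P img ` carrier P"
  by (rule image_eqI[where x = "\<lambda>p. 0"]) (simp_all add: lin_ext_zero carrier_def)

lemma lin_ext_image_sum:
  "finite A \<Longrightarrow> (\<And>j. j \<in> A \<Longrightarrow> f j \<in> lin_ext P img ` carrier P)
    \<Longrightarrow> (\<lambda>c. \<Sum>j\<in>A. f j c) \<in> lin_ext P img ` carrier P"
  by (induction A rule: finite_induct) (simp_all add: lin_ext_image_zero lin_ext_image_add)

lemma lin_ext_image_column: "finite P \<Longrightarrow> p \<in> P \<Longrightarrow> img p \<in> lin_ext P img ` carrier P"
  by (rule image_eqI[where x = "\<lambda>p'. if p' = p then 1 else 0"]) (auto simp: lin_ext_unit carrier_def)

lemma carrier_subset_lin_ext_image: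
  fixes img :: "'b \<Rightarrow> 'b \<Rightarrow> 'a::comm_ring_1"
  assumes "finite P" and units: "\<And>p. p \<in> P \<Longrightarrow> (\<lambda>c. if c = p then 1 else 0) \<in> lin_ext P img ` carrier P"
  shows "carrier P \<subseteq> lin_ext P img ` carrier P"
proof
  fix y :: "'b \<Rightarrow> 'a" assume y: "y \<in> carrier P"
  have "y = (\<lambda>c. \<Sum>p\<in>P. y p * (if c = p then 1 else 0))"
    using y \<open>finite P\<close> by (auto simp: carrier_def if_distrib[of "\<lambda>t. _ * t"] sum.delta cong: if_cong)
  also have "\<dots> \<in> lin_ext P img ` carrier P"
    using \<open>finite P\<close> units by (intro lin_ext_image_sum lin_ext_image_scale)
  finally show "y \<in> lin_ext P img ` carrier P" .
qed

lemma bij_betw_lin_ext: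
  assumes "finite P"
    and "\<And>p c. p \<in> P \<Longrightarrow> c \<notin> P \<Longrightarrow> img p c = 0"
    and "\<And>z. z \<in> carrier P \<Longrightarrow> lin_ext P img z = (\<lambda>c. 0) \<Longrightarrow> z = (\<lambda>p. 0)"
    and "\<And>p. p \<in> P \<Longrightarrow> (\<lambda>c. if c = p then 1 else 0) \<in> lin_ext P img ` carrier P"
  shows "bij_betw (lin_ext P img) (carrier P) (carrier P)"
  using assms inj_on_lin_ext[of P img] carrier_subset_lin_ext_image[of P img] lin_ext_in_carrier[of P img]
  by (auto simp: bij_betw_def)

lemma bij_betw_scale:
  assumes "\<And>p. w p * w' p = (1::'a::comm_ring_1)"
  shows "bij_betw (\<lambda>x p. w p * x p) (carrier P) (carrier P)"
proof (rule bij_betw_byWitness[where f' = "\<lambda>x p. w' p * x p"])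
  have "w' p * (w p * x) = x" for p x
    using assms[of p] by (metis mult.assoc mult.commute mult_1)
  then show "\<forall>x\<in>carrier P. (\<lambda>p. w' p * (w p * x p)) = x" "\<forall>x\<in>carrier P. (\<lambda>p. w p * (w' p * x p)) = x"
    by (simp_all add: mult.left_commute[of "w _"])
qed (auto simp: carrier_def)

lemma mult_if_zero: "(f::'a::mult_zero) * (if P then x else 0) = (if P then f * x else 0)"
  and if_zero_mult: "(if P then x else 0) * (f::'a::mult_zero) = (if P then x * f else 0)"
  by simp_all

lemma nat_0_1_2_cases:
  fixes l :: nat
  obtains "l = 0" | "l = 1" | "l = 2" | "2 < l"
  by linarith

lemma finite_basis [simp]: "finite (basis n)"
  by (simp add: basis_def)

locale Uq_gl_vector =
  fixes q qi :: "'a::comm_ring_1" and n :: nat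
  assumes q_qi: "q * qi = 1"
begin

abbreviation "B \<equiv> basis n"
abbreviation "P \<equiv> B \<times> B"
abbreviation "V \<equiv> vec_rep q qi"
abbreviation "Vdual \<equiv> dual_rep q qi B V"
abbreviation "Vdual' \<equiv> dualp_rep q qi B V"
abbreviation "Vdual_V \<equiv> tensor_rep q qi B B Vdual V"
abbreviation "Vdual'_V \<equiv> tensor_rep q qi B B Vdual' V"
abbreviation "V_Vdual \<equiv> tensor_rep q qi B B V Vdual"

lemma qi_q: "qi * q = 1"
  using q_qi by (simp add: mult.commute)

lemma q_qi_cancel [simp]: "q * (qi * z) = z" "qi * (q * z) = z"
  using q_qi qi_q by (simp_all add: mult.assoc[symmetric])

lemma qp_inverse [simp]: "qp q qi k * qp q qi (- k) = 1" "qp q qi (- k) * qp q qi k = 1"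
  using qp_add[OF q_qi, of k "- k"] qp_add[OF q_qi, of "- k" k] by simp_all

lemma V_Kh: "V (Kh h) = (\<lambda>j k. if j = k then qp q qi (h j) else 0)"
  by (simp add: vec_rep_def)

lemma V_E_vanish: "2 \<le> m \<Longrightarrow> V (E i m) = (\<lambda>j k. 0)"
  and V_F_vanish: "2 \<le> m \<Longrightarrow> V (F i m) = (\<lambda>j k. 0)"
  by (simp_all add: vec_rep_def)

lemma Vdual_E_vanish: "2 \<le> m \<Longrightarrow> Vdual (E i m) = (\<lambda>j k. 0)"
  and Vdual_F_vanish: "2 \<le> m \<Longrightarrow> Vdual (F i m) = (\<lambda>j k. 0)"
  and Vdual'_E_vanish: "2 \<le> m \<Longrightarrow> Vdual' (E i m) = (\<lambda>j k. 0)"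
  and Vdual'_F_vanish: "2 \<le> m \<Longrightarrow> Vdual' (F i m) = (\<lambda>j k. 0)"
  by (simp_all add: dual_rep_def dualp_rep_def transp_def smul_def mmul_def V_E_vanish V_F_vanish)

lemma Vdual_Kh: "Vdual (Kh h) = (\<lambda>j k. if j = k then qp q qi (- h j) else 0)"
  and Vdual'_Kh: "Vdual' (Kh h) = (\<lambda>j k. if j = k then qp q qi (- h j) else 0)"
  by (auto simp: dual_rep_def dualp_rep_def transp_def vec_rep_def intro!: ext)

lemma Vdual_E:
  "j \<in> B \<Longrightarrow> k \<in> B \<Longrightarrow> Vdual (E i l) j k =
    (if l = 0 then (if j = k then 1 else 0) else if l = 1 then (if j = Suc i \<and> k = i then - qi else 0) else 0)"
  by (simp add: dual_rep_def transp_def smul_def Kpow_def V_Kh mmul_diag_right) (auto simp: vec_rep_def)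

lemma Vdual_F:
  "j \<in> B \<Longrightarrow> k \<in> B \<Longrightarrow> Vdual (F i l) j k =
    (if l = 0 then (if j = k then 1 else 0) else if l = 1 then (if j = i \<and> k = Suc i then - q else 0) else 0)"
  by (simp add: dual_rep_def transp_def smul_def Kpow_def V_Kh mmul_diag_left) (auto simp: vec_rep_def)

lemma Vdual'_E:
  "j \<in> B \<Longrightarrow> k \<in> B \<Longrightarrow> Vdual' (E i l) j k =
    (if l = 0 then (if j = k then 1 else 0) else if l = 1 then (if j = Suc i \<and> k = i then - q else 0) else 0)"
  by (simp add: dualp_rep_def transp_def smul_def Kpow_def V_Kh mmul_diag_left) (auto simp: vec_rep_def)

lemma Vdual'_F:
  "j \<in> B \<Longrightarrow> k \<in> B \<Longrightarrow> Vdual' (F i l) j k =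
    (if l = 0 then (if j = k then 1 else 0) else if l = 1 then (if j = i \<and> k = Suc i then - qi else 0) else 0)"
  by (simp add: dualp_rep_def transp_def smul_def Kpow_def V_Kh mmul_diag_right) (auto simp: vec_rep_def)

lemmas factor_entries = kron_def Kpow_def V_Kh Vdual_Kh Vdual'_Kh mmul_diag_right
  Vdual_E Vdual_F Vdual'_E Vdual'_F

lemma tensor_Kh:
  assumes "p \<in> P" "a \<in> B" "b \<in> B"
  shows "Vdual_V (Kh h) p (a, b) = (if p = (a, b) then qp q qi (- h a) * qp q qi (h b) else 0)"
    and "Vdual'_V (Kh h) p (a, b) = (if p = (a, b) then qp q qi (- h a) * qp q qi (h b) else 0)"
    and "V_Vdual (Kh h) (a, b) p = (if p = (a, b) then qp q qi (h a) * qp q qi (- h b) else 0)"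
  using assms by (auto simp: tensor_rep_def factor_entries split: if_splits)

lemma tensor_E_0:
  assumes "p \<in> P" "a \<in> B" "b \<in> B"
  shows "Vdual_V (E i 0) p (a, b) = (if p = (a, b) then 1 else 0)"
    and "Vdual'_V (E i 0) p (a, b) = (if p = (a, b) then 1 else 0)"
    and "V_Vdual (E i 0) (a, b) p = (if p = (a, b) then 1 else 0)"
  using assms by (auto simp: tensor_rep_E_0 factor_entries vec_rep_def split: if_splits)

lemma tensor_F_0:
  assumes "p \<in> P" "a \<in> B" "b \<in> B"
  shows "Vdual_V (F i 0) p (a, b) = (if p = (a, b) then 1 else 0)"
    and "Vdual'_V (F i 0) p (a, b) = (if p = (a, b) then 1 else 0)"
    and "V_Vdual (F i 0) (a, b) p = (if p = (a, b) then 1 else 0)"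
  using assms by (auto simp: tensor_rep_F_0 factor_entries vec_rep_def split: if_splits)

lemma tensor_E_1:
  assumes "p \<in> P" "a \<in> B" "b \<in> B"
  shows "Vdual_V (E i (Suc 0)) p (a, b) =
      (if p = (Suc i, b) then (if a = i then - qi * (if b = i then qi else if b = Suc i then q else 1) else 0) else 0)
    + (if p = (a, i) then (if b = Suc i then 1 else 0) else 0)"
    and "Vdual'_V (E i (Suc 0)) p (a, b) =
      (if p = (Suc i, b) then (if a = i then - q * (if b = i then qi else if b = Suc i then q else 1) else 0) else 0)
    + (if p = (a, i) then (if b = Suc i then 1 else 0) else 0)"
    and "V_Vdual (E i (Suc 0)) (a, b) p =
      (if p = (Suc i, b) then (if a = i then (if b = i then q else if b = Suc i then qi else 1) else 0) else 0)
    + (if p = (a, i) then (if b = Suc i then - qi else 0) else 0)"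
  using assms by (cases p; simp add: tensor_rep_E_1 factor_entries; auto simp: vec_rep_def)+

lemma tensor_F_1:
  assumes "p \<in> P" "a \<in> B" "b \<in> B"
  shows "Vdual_V (F i (Suc 0)) p (a, b) =
      (if p = (a, Suc i) then (if b = i then (if a = i then qi else if a = Suc i then q else 1) else 0) else 0)
    + (if p = (i, b) then (if a = Suc i then - q else 0) else 0)"
    and "Vdual'_V (F i (Suc 0)) p (a, b) =
      (if p = (a, Suc i) then (if b = i then (if a = i then qi else if a = Suc i then q else 1) else 0) else 0)
    + (if p = (i, b) then (if a = Suc i then - qi else 0) else 0)"
    and "V_Vdual (F i (Suc 0)) (a, b) p =
      (if p = (a, Suc i) then (if b = i then - q * (if a = i then q else if a = Suc i then qi else 1) else 0) else 0)
    + (if p = (i, b) then (if a = Suc i then 1 else 0) else 0)"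
  using assms by (cases p; simp add: tensor_rep_F_1 factor_entries; auto simp: vec_rep_def)+

lemma tensor_E_2:
  assumes "p \<in> P" "a \<in> B" "b \<in> B"
  shows "Vdual_V (E i 2) p (a, b) = (if p = (Suc i, i) then (if a = i \<and> b = Suc i then - qi else 0) else 0)"
    and "Vdual'_V (E i 2) p (a, b) = (if p = (Suc i, i) then (if a = i \<and> b = Suc i then - q else 0) else 0)"
    and "V_Vdual (E i 2) (a, b) p = (if p = (Suc i, i) then (if a = i \<and> b = Suc i then - qi else 0) else 0)"
  using assms by (cases p; simp add: tensor_rep_E_2 factor_entries vec_rep_def q_qi qi_q)+

lemma tensor_F_2:
  assumes "p \<in> P" "a \<in> B" "b \<in> B"
  shows "Vdual_V (F i 2) p (a, b) = (if p = (i, Suc i) then (if a = Suc i \<and> b = i then - q else 0) else 0)"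
    and "Vdual'_V (F i 2) p (a, b) = (if p = (i, Suc i) then (if a = Suc i \<and> b = i then - qi else 0) else 0)"
    and "V_Vdual (F i 2) (a, b) p = (if p = (i, Suc i) then (if a = Suc i \<and> b = i then - q else 0) else 0)"
  using assms by (cases p; simp add: tensor_rep_F_2 factor_entries vec_rep_def q_qi qi_q)+

lemma tensor_vanish:
  assumes "2 < l"
  shows "Vdual_V (E i l) = (\<lambda>p r. 0)" "Vdual'_V (E i l) = (\<lambda>p r. 0)" "V_Vdual (E i l) = (\<lambda>p r. 0)"
    and "Vdual_V (F i l) = (\<lambda>p r. 0)" "Vdual'_V (F i l) = (\<lambda>p r. 0)" "V_Vdual (F i l) = (\<lambda>p r. 0)"
  using assms by (simp_all add: tensor_rep_E_vanish tensor_rep_F_vanish V_E_vanish V_F_vanish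
      Vdual_E_vanish Vdual_F_vanish Vdual'_E_vanish Vdual'_F_vanish)

lemmas tensor_entries = tensor_Kh tensor_E_0 tensor_F_0 tensor_E_1 tensor_F_1 tensor_E_2 tensor_F_2

lemma psi_intertwines:
  assumes "valid_gen n g" "r \<in> P" "c \<in> P"
  shows "(\<Sum>p\<in>P. psi_img q qi p c * Vdual_V g p r) = (\<Sum>p\<in>P. V_Vdual g c p * psi_img q qi r p)"
proof -
  obtain a b c1 c2 where r: "r = (a, b)" "a \<in> B" "b \<in> B" and c: "c = (c1, c2)" "c1 \<in> B" "c2 \<in> B"
    using assms(2,3) by auto
  show ?thesis
  proof (cases g)
    case (Kh h)
    then show ?thesis using r c
      by (simp only: tensor_entries cong: sum.cong;
          simp add: distrib_left distrib_right sum.distrib mult_if_zero if_zero_mult sum.delta sum.delta' basis_def;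
          auto simp: psi_img_def algebra_simps q_qi qi_q)
  next
    case (E i l)
    with assms(1) have "1 \<le> i" "i < n" by (auto simp: valid_gen_def)
    with E r c show ?thesis
      by (cases l rule: nat_0_1_2_cases;
          simp only: One_nat_def tensor_entries tensor_vanish cong: sum.cong;
          simp add: distrib_left distrib_right sum.distrib mult_if_zero if_zero_mult sum.delta sum.delta' basis_def;
          auto simp: psi_img_def algebra_simps q_qi qi_q)
  next
    case (F i l)
    with assms(1) have "1 \<le> i" "i < n" by (auto simp: valid_gen_def)
    with F r c show ?thesis
      by (cases l rule: nat_0_1_2_cases;
          simp only: One_nat_def tensor_entries tensor_vanish cong: sum.cong;
          simp add: distrib_left distrib_right sum.distrib mult_if_zero if_zero_mult sum.delta sum.delta' basis_def;
          auto simp: psi_img_def algebra_simps q_qi qi_q)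
  qed
qed

lemma psi_img_vanish: "p \<in> P \<Longrightarrow> c \<notin> P \<Longrightarrow> psi_img q qi p c = 0"
  by (cases p, cases c) (auto simp: psi_img_def basis_def)

lemma psi_img_off_diag: "c1 \<noteq> c2 \<Longrightarrow> psi_img q qi p (c1, c2) = (if p = (c2, c1) then 1 else 0)"
  by (cases p) (auto simp: psi_img_def)

lemma psi_img_diag:
  "1 \<le> a \<Longrightarrow> psi_img q qi p (a, a) = (if p = (a, a) then qi else 0) + (if fst p = snd p \<and> a < fst p then qi - q else 0)"
  by (cases p) (auto simp: psi_img_def)

lemma psi_kernel:
  assumes z: "z \<in> carrier P" and zero: "lin_ext P (psi_img q qi) z = (\<lambda>c. 0)"
  shows "z = (\<lambda>p. 0)"
proof -
  have off_diag: "z (c2, c1) = 0" if "c1 \<in> B" "c2 \<in> B" "c1 \<noteq> c2" for c1 c2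
  proof -
    have "0 = lin_ext P (psi_img q qi) z (c1, c2)" using zero by simp
    also have "\<dots> = z (c2, c1)"
      using that by (simp add: lin_ext_def psi_img_off_diag if_distrib[of "\<lambda>t. _ * t"] sum.delta cong: if_cong)
    finally show ?thesis by simp
  qed
  have diag: "z (a, a) = 0" if "a \<in> B" for a
    using that
  proof (induction "n - a" arbitrary: a rule: less_induct)
    case less
    have higher: "z p * (if fst p = snd p \<and> a < fst p then qi - q else 0) = 0" if "p \<in> P" for p
    proof (cases "fst p = snd p \<and> a < fst p")
      case True
      then have "z (fst p, fst p) = 0"
        using that less.prems less.hyps[of "fst p"] by (auto simp: basis_def)
      with True show ?thesis by (cases p) simp
    qed auto
    have "0 = lin_ext P (psi_img q qi) z (a, a)" using zero by simp
    also have "\<dots> = (\<Sum>p\<in>P. z p * (if p = (a, a) then qi else 0))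
        + (\<Sum>p\<in>P. z p * (if fst p = snd p \<and> a < fst p then qi - q else 0))"
      using less.prems by (simp add: lin_ext_def psi_img_diag basis_def distrib_left sum.distrib)
    also have "\<dots> = z (a, a) * qi"
      using less.prems higher by (simp add: if_distrib[of "\<lambda>t. _ * t"] sum.delta cong: if_cong)
    finally have "q * (z (a, a) * qi) = 0" by simp
    then show ?case by (simp add: mult.commute)
  qed
  show ?thesis
  proof
    fix p show "z p = 0"
    proof (cases "p \<in> P")
      case True
      then obtain x y where "p = (x, y)" "x \<in> B" "y \<in> B" by auto
      then show ?thesis using diag off_diag[of y x] by (cases "x = y") auto
    next
      case False
      then show ?thesis using z by (cases p) (simp add: carrier_def)
    qed
  qed
qed

lemma psi_img_column_off_diag: "x \<noteq> y \<Longrightarrow> psi_img q qi (y, x) = (\<lambda>c. if c = (x, y) then 1 else 0)"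
  by (auto simp: psi_img_def)

lemma psi_img_column_diag:
  "psi_img q qi (a, a) =
    (\<lambda>c. qi * (if c = (a, a) then 1 else 0) + (qi - q) * (\<Sum>l\<in>{1..<a}. if c = (l, l) then 1 else 0))"
proof
  fix c :: "nat \<times> nat"
  obtain x y where c: "c = (x, y)" by fastforce
  show "psi_img q qi (a, a) c = qi * (if c = (a, a) then 1 else 0) + (qi - q) * (\<Sum>l\<in>{1..<a}. if c = (l, l) then 1 else 0)"
  proof (cases "x = y")
    case True
    then show ?thesis using c by (auto simp: psi_img_def sum.delta)
  next
    case False
    then have "(\<Sum>l\<in>{1..<a}. if c = (l, l) then 1 else 0) = (0::'a)"
      using c by (intro sum.neutral) auto
    then show ?thesis using False c by (auto simp: psi_img_def)
  qed
qed

lemma psi_units: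
  assumes "p \<in> P"
  shows "(\<lambda>c. if c = p then 1 else 0) \<in> lin_ext P (psi_img q qi) ` carrier P"
proof -
  obtain x y where p: "p = (x, y)" "x \<in> B" "y \<in> B" using assms by auto
  have diag: "(\<lambda>c. if c = (a, a) then 1 else 0) \<in> lin_ext P (psi_img q qi) ` carrier P" if "a \<in> B" for a
    using that
  proof (induction a rule: less_induct)
    case (less a)
    have "(\<lambda>c. q * psi_img q qi (a, a) c + (- (q * (qi - q))) * (\<Sum>l\<in>{1..<a}. if c = (l, l) then 1 else 0))
        \<in> lin_ext P (psi_img q qi) ` carrier P"
      using less by (intro lin_ext_image_add lin_ext_image_scale lin_ext_image_column lin_ext_image_sum)
        (auto simp: basis_def)
    moreover have "(\<lambda>c. q * psi_img q qi (a, a) c + (- (q * (qi - q))) * (\<Sum>l\<in>{1..<a}. if c = (l, l) then 1 else 0))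
        = (\<lambda>c. if c = (a, a) then 1 else 0)"
      by (simp add: psi_img_column_diag algebra_simps q_qi)
    ultimately show ?case by simp
  qed
  show ?thesis
  proof (cases "x = y")
    case True
    then show ?thesis using diag p by simp
  next
    case False
    then show ?thesis
      using lin_ext_image_column[of P "(y, x)" "psi_img q qi"] p psi_img_column_off_diag[of x y] by simp
  qed
qed

lemma psi_bij: "bij_betw (lin_ext P (psi_img q qi)) (carrier P) (carrier P)"
  by (rule bij_betw_lin_ext) (simp_all add: psi_img_vanish psi_kernel psi_units)

definition pivot :: "nat \<Rightarrow> 'a" where
  "pivot i = qp q qi (int n + 1 - 2 * int i)"

lemma pivot_Suc: "pivot (Suc i) = qi * qi * pivot i"
proof -
  have "int n + 1 - 2 * int (Suc i) = - 2 + (int n + 1 - 2 * int i)" by simp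
  then show ?thesis
    unfolding pivot_def by (simp only: qp_add[OF q_qi]) (simp add: qp_def power2_eq_square)
qed

lemma psi'_img_eq_pivot: "psi'_img q qi n = (\<lambda>p c. pivot (fst p) * psi_img q qi p c)"
  by (intro ext) (auto simp: psi'_img_def psi_img_def pivot_def)

lemma pivot_intertwines:
  assumes "valid_gen n g" "p \<in> P" "r \<in> P"
  shows "pivot (fst p) * Vdual'_V g p r = Vdual_V g p r * pivot (fst r)"
proof -
  obtain a b where r: "r = (a, b)" "a \<in> B" "b \<in> B" using assms(3) by auto
  show ?thesis
  proof (cases g)
    case (Kh h)
    then show ?thesis using r assms(2) by (simp only: tensor_entries; auto)
  next
    case (E i l)
    then show ?thesis using r assms(2)
      by (cases l rule: nat_0_1_2_cases; simp only: One_nat_def tensor_entries tensor_vanish;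
          auto simp: pivot_Suc mult_ac q_qi)
  next
    case (F i l)
    then show ?thesis using r assms(2)
      by (cases l rule: nat_0_1_2_cases; simp only: One_nat_def tensor_entries tensor_vanish;
          auto simp: pivot_Suc mult_ac q_qi)
  qed
qed

lemma psi'_intertwines:
  assumes "valid_gen n g" "r \<in> P" "c \<in> P"
  shows "(\<Sum>p\<in>P. psi'_img q qi n p c * Vdual'_V g p r) = (\<Sum>p\<in>P. V_Vdual g c p * psi'_img q qi n r p)"
proof -
  have "(\<Sum>p\<in>P. psi'_img q qi n p c * Vdual'_V g p r) = (\<Sum>p\<in>P. psi_img q qi p c * Vdual_V g p r) * pivot (fst r)"
    using assms by (simp add: psi'_img_eq_pivot sum_distrib_right mult.assoc pivot_intertwines mult.left_commute[of "pivot _"])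
  also have "\<dots> = (\<Sum>p\<in>P. V_Vdual g c p * psi'_img q qi n r p)"
    using assms by (simp add: psi_intertwines psi'_img_eq_pivot sum_distrib_left sum_distrib_right mult_ac)
  finally show ?thesis .
qed

lemma psi_is_U_iso: "is_U_iso n P Vdual_V P V_Vdual (lin_ext P (psi_img q qi))"
  unfolding is_U_iso_def
  by (intro conjI allI impI lin_ext_act_commute psi_bij) (simp_all add: psi_img_vanish psi_intertwines)

lemma psi'_is_U_iso: "is_U_iso n P Vdual'_V P V_Vdual (lin_ext P (psi'_img q qi n))"
  unfolding is_U_iso_def
proof (intro conjI allI impI lin_ext_act_commute)
  show "bij_betw (lin_ext P (psi'_img q qi n)) (carrier P) (carrier P)"
    unfolding psi'_img_eq_pivot lin_ext_scale_rows
    by (rule bij_betw_trans[OF bij_betw_scale[where w' = "\<lambda>p. qp q qi (- (int n + 1 - 2 * int (fst p)))"] psi_bij])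
      (unfold pivot_def, rule qp_inverse)
qed (simp_all add: psi'_img_eq_pivot psi_img_vanish psi'_intertwines[unfolded psi'_img_eq_pivot])

end

theorem lemma5p1:
  fixes q qi :: "'a::comm_ring_1" and n :: nat
  assumes "q * qi = 1" and "1 \<le> n"
  shows "is_U_iso n (basis n \<times> basis n)
           (tensor_rep q qi (basis n) (basis n) (dualp_rep q qi (basis n) (vec_rep q qi)) (vec_rep q qi))
           (basis n \<times> basis n)
           (tensor_rep q qi (basis n) (basis n) (vec_rep q qi) (dual_rep q qi (basis n) (vec_rep q qi)))
           (lin_ext (basis n \<times> basis n) (psi'_img q qi n))
       \<and> is_U_iso n (basis n \<times> basis n)
           (tensor_rep q qi (basis n) (basis n) (dual_rep q qi (basis n) (vec_rep q qi)) (vec_rep q qi))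
           (basis n \<times> basis n)
           (tensor_rep q qi (basis n) (basis n) (vec_rep q qi) (dual_rep q qi (basis n) (vec_rep q qi)))
           (lin_ext (basis n \<times> basis n) (psi_img q qi))"
proof -
  interpret Uq_gl_vector q qi n
    using assms(1) by unfold_locales
  show ?thesis
    using psi'_is_U_iso psi_is_U_iso by blast
qed

end
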